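(* Suppose a task class requires output precision $\Delta$ from minimal embedding perturbation $r$, so that $\Lambda(W)\ge\Delta/r$. Then the LAWS routing radius $\tau^* = (\delta-\varepsilon_{\mathrm{fit}}-2\Lambda(W)C_E)/(\Lambda(W)C_E)$ satisfies \[ \tau^* \le \frac{\delta - \varepsilon_{\mathrm{fit}} - 2(\Delta/r)C_E}{(\Delta/r)C_E}. \] If $\Delta > r(\delta-\varepsilon_{\mathrm{fit}})/(2C_E)$, then $\tau^*<0$ and no expert can be certified, so LAWS must always invoke the base model for such tasks.
   Context: $\Lambda(W)>0$ is the end-to-end Lipschitz constant of the transformer base model, $C_E = \max_{t,t'}\|E(t)-E(t')\|$ the embedding diameter, $\delta>0$ the LAWS quality threshold and $\varepsilon_{\mathrm{fit}}\ge0$ the expert fitting error, with $\delta - \varepsilon_{\mathrm{fit}} \ge 0$ implicitly. An expert with negative routing radius covers no query. *)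

theory Defs
  imports "HOL-Analysis.Analysis"
begin

definition laws_tau :: "real \<Rightarrow> real \<Rightarrow> real \<Rightarrow> real \<Rightarrow> real" where
  "laws_tau \<delta> \<epsilon>fit \<Lambda> CE = (\<delta> - \<epsilon>fit - 2 * \<Lambda> * CE) / (\<Lambda> * CE)"

definition expert_covers :: "'a::metric_space \<Rightarrow> real \<Rightarrow> 'a \<Rightarrow> bool" where
  "expert_covers c \<tau> q \<longleftrightarrow> dist q c \<le> \<tau>"

end

theory Submission
  imports Defs
begin

text \<open>Writing \<open>d = \<delta> - \<epsilon>\<^sub>f\<^sub>i\<^sub>t \<ge> 0\<close>, the radius is \<open>d / (\<Lambda> C\<^sub>E) - 2\<close>, which is antitone in \<open>\<Lambda>\<close>;
  so the lower bound \<open>\<Lambda> \<ge> \<Delta>/r\<close> bounds it by its value at \<open>\<Delta>/r\<close>. It is negative exactly when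
  \<open>d < 2 \<Lambda> C\<^sub>E\<close>, and the threshold on \<open>\<Delta>\<close> says \<open>d < 2 (\<Delta>/r) C\<^sub>E\<close>. A ball of negative
  radius is empty.\<close>

lemma laws_tau_eq:
  assumes "\<Lambda> * CE \<noteq> 0"
  shows "laws_tau \<delta> \<epsilon>fit \<Lambda> CE = (\<delta> - \<epsilon>fit) / (\<Lambda> * CE) - 2"
  using assms by (simp add: laws_tau_def field_simps)

lemma laws_tau_antimono:
  assumes "0 < L" and "L \<le> \<Lambda>" and "CE > 0" and "\<delta> - \<epsilon>fit \<ge> 0"
  shows "laws_tau \<delta> \<epsilon>fit \<Lambda> CE \<le> laws_tau \<delta> \<epsilon>fit L CE"
proof -
  have "(\<delta> - \<epsilon>fit) / (\<Lambda> * CE) \<le> (\<delta> - \<epsilon>fit) / (L * CE)"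
    using assms by (intro divide_left_mono mult_right_mono) auto
  with assms show ?thesis by (simp add: laws_tau_eq)
qed

lemma laws_tau_neg_iff:
  assumes "\<Lambda> > 0" and "CE > 0"
  shows "laws_tau \<delta> \<epsilon>fit \<Lambda> CE < 0 \<longleftrightarrow> \<delta> - \<epsilon>fit < 2 * \<Lambda> * CE"
proof -
  have "\<Lambda> * CE > 0"
    using assms by simp
  then show ?thesis
    by (auto simp: laws_tau_def divide_less_0_iff)
qed

lemma not_expert_covers_neg_radius:
  assumes "\<tau> < 0"
  shows "\<not> expert_covers c \<tau> q"
  using assms zero_le_dist[of q c] unfolding expert_covers_def by linarith

theorem mainTheorem13:
  fixes \<Lambda> CE \<delta> \<epsilon>fit \<Delta> r :: real
  assumes "\<Lambda> > 0" and "CE > 0" and "\<delta> > 0" and "\<epsilon>fit \<ge> 0" and "\<delta> - \<epsilon>fit \<ge> 0"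
    and "\<Delta> > 0" and "r > 0"
    and "\<Lambda> \<ge> \<Delta> / r"
  shows "laws_tau \<delta> \<epsilon>fit \<Lambda> CE \<le> (\<delta> - \<epsilon>fit - 2 * (\<Delta> / r) * CE) / ((\<Delta> / r) * CE)
         \<and> (\<Delta> > r * (\<delta> - \<epsilon>fit) / (2 * CE) \<longrightarrow>
           laws_tau \<delta> \<epsilon>fit \<Lambda> CE < 0 \<and>
           (\<forall>(c::'a::metric_space) q. \<not> expert_covers c (laws_tau \<delta> \<epsilon>fit \<Lambda> CE) q))"
proof -
  have "laws_tau \<delta> \<epsilon>fit \<Lambda> CE \<le> laws_tau \<delta> \<epsilon>fit (\<Delta> / r) CE"
    using assms by (intro laws_tau_antimono) auto
  moreover have "laws_tau \<delta> \<epsilon>fit \<Lambda> CE < 0" if "\<Delta> > r * (\<delta> - \<epsilon>fit) / (2 * CE)"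
  proof -
    have "\<delta> - \<epsilon>fit < 2 * (\<Delta> / r) * CE"
      using that assms by (simp add: field_simps)
    also have "\<dots> \<le> 2 * \<Lambda> * CE"
      using assms by (intro mult_right_mono) auto
    finally show ?thesis
      using assms by (simp add: laws_tau_neg_iff)
  qed
  ultimately show ?thesis
    by (auto simp: laws_tau_def not_expert_covers_neg_radius)
qed

end
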